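(* Let $\rho^a,\rho^b\in\mathbb R^M_{>0}$, $M_a=\{j\in M:\rho^a_j\ge\rho^b_j\}$ and $M_b=\{j\in M:\rho^a_j\le\rho^b_j\}$. Then $${\rm LW}^{{\rm OPT}(M_a,\rho^a)}+{\rm LW}^{{\rm OPT}(M_b,\rho^b)}\ \ge\ \frac12\bigl({\rm LW}^{{\rm OPT}(M,\rho^a)}+{\rm LW}^{{\rm OPT}(M,\rho^b)}\bigr).$$
   Context: Market model. Buyers $N_0=\{1,\dots,n\}$, sellers $M=\{1,\dots,m\}$, bipartite edge set $E\subseteq N_0\times M$; $E_S$ is the set of edges incident to participants in $S$ ($E_i=E_{\{i\}}$); $w(F)=\sum_{e\in F}w_e$. Each seller $j$ has a monotone submodular $f_j:2^{E_j}\to\mathbb R_+$ with $f_j(\emptyset)=0$, polymatroid $P_j=\{y\in\mathbb R^{E_j}_+:y(F)\le f_j(F)\ \forall F\subseteq E_j\}$ ($f_j(E_j)$ = her total amount of a homogeneous divisible good). Buyer $i$ has per-unit valuation $v_i>0$ and budget $B_i\ge0$. For a seller set $M'\subseteq M$ and seller valuations $\sigma\in\mathbb R^{M'}_{>0}$, consider the submarket with sellers $M'$, edges $E'=\{ij\in E:j\in M'\}$ and constraint $P_{M'}=\{w\in\mathbb R^{E'}_+: w|_{E_j}\in P_j\ \forall j\in M'\}$; for $w\in P_{M'}$ its liquid welfare is $\sum_{i\in N_0}\min(v_iw(E_i\cap E'),B_i)+\sum_{j\in M'}\sigma_j(f_j(E_j)-w(E_j))$, and ${\rm LW}^{{\rm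 OPT}(M',\sigma)}$ is the maximum of this over $w\in P_{M'}$. *)

theory Defs
  imports Main "HOL-Library.Extended_Real" Complex_Main
begin

text \<open>Market model. Buyers are 1..n, sellers 1..m, edges are pairs (buyer, seller).
  A seller valuation function f :: seller => edge set => real, w :: edge => real.\<close>

definition edges_at_buyer :: "(nat \<times> nat) set \<Rightarrow> nat \<Rightarrow> (nat \<times> nat) set" where
  "edges_at_buyer E i = {e \<in> E. fst e = i}"

definition edges_at_seller :: "(nat \<times> nat) set \<Rightarrow> nat \<Rightarrow> (nat \<times> nat) set" where
  "edges_at_seller E j = {e \<in> E. snd e = j}"

definition sub_edges :: "(nat \<times> nat) set \<Rightarrow> nat set \<Rightarrow> (nat \<times> nat) set" where
  "sub_edges E M' = {e \<in> E. snd e \<in> M'}"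

definition mono_submod_on :: "'a set \<Rightarrow> ('a set \<Rightarrow> real) \<Rightarrow> bool" where
  "mono_submod_on G g \<longleftrightarrow>
     g {} = 0 \<and>
     (\<forall>F. F \<subseteq> G \<longrightarrow> 0 \<le> g F) \<and>
     (\<forall>F H. F \<subseteq> H \<and> H \<subseteq> G \<longrightarrow> g F \<le> g H) \<and>
     (\<forall>F H. F \<subseteq> G \<and> H \<subseteq> G \<longrightarrow> g (F \<union> H) + g (F \<inter> H) \<le> g F + g H)"

text \<open>w \<in> P_{M'}: nonnegative on E' and w restricted to E_j lies in polymatroid P_j for all j in M'.
  (Values of w outside E' are irrelevant.)\<close>
definition in_P :: "(nat \<times> nat) set \<Rightarrow> (nat \<Rightarrow> (nat \<times> nat) set \<Rightarrow> real) \<Rightarrow> nat set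
                    \<Rightarrow> ((nat \<times> nat) \<Rightarrow> real) \<Rightarrow> bool" where
  "in_P E f M' w \<longleftrightarrow>
     (\<forall>e \<in> sub_edges E M'. 0 \<le> w e) \<and>
     (\<forall>j \<in> M'. \<forall>F. F \<subseteq> edges_at_seller E j \<longrightarrow> sum w F \<le> f j F)"

definition liquid_welfare ::
  "nat set \<Rightarrow> (nat \<times> nat) set \<Rightarrow> (nat \<Rightarrow> (nat \<times> nat) set \<Rightarrow> real) \<Rightarrow> (nat \<Rightarrow> real)
   \<Rightarrow> (nat \<Rightarrow> real) \<Rightarrow> nat set \<Rightarrow> (nat \<Rightarrow> real) \<Rightarrow> ((nat \<times> nat) \<Rightarrow> real) \<Rightarrow> real" where
  "liquid_welfare N0 E f v B M' \<sigma> w =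
     (\<Sum>i\<in>N0. min (v i * sum w (edges_at_buyer E i \<inter> sub_edges E M')) (B i))
     + (\<Sum>j\<in>M'. \<sigma> j * (f j (edges_at_seller E j) - sum w (edges_at_seller E j)))"

text \<open>LW^{OPT(M',sigma)}: the optimum (maximum, which is attained) of liquid welfare over P_{M'}.\<close>
definition LW_OPT ::
  "nat set \<Rightarrow> (nat \<times> nat) set \<Rightarrow> (nat \<Rightarrow> (nat \<times> nat) set \<Rightarrow> real) \<Rightarrow> (nat \<Rightarrow> real)
   \<Rightarrow> (nat \<Rightarrow> real) \<Rightarrow> nat set \<Rightarrow> (nat \<Rightarrow> real) \<Rightarrow> real" where
  "LW_OPT N0 E f v B M' \<sigma> = (SUP w \<in> {w. in_P E f M' w}. liquid_welfare N0 E f v B M' \<sigma> w)"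

end

theory Submission
  imports Defs
begin

text \<open>Each optimum over the whole market is bounded by the left-hand side, which is stronger
  than the claimed bound on their average. Take a feasible allocation \<open>w\<close> of the full market,
  valued with \<open>\<rho>\<^sup>a\<close>. Its restriction to the sellers in \<open>M\<^sub>a\<close> is feasible in the submarket
  \<open>(M\<^sub>a, \<rho>\<^sup>a)\<close>, and its restriction to the sellers in \<open>M\<^sub>b - M\<^sub>a\<close> is feasible in \<open>(M\<^sub>b, \<rho>\<^sup>b)\<close>.
  A buyer's capped value \<open>min (v\<^sub>i x) B\<^sub>i\<close> is subadditive in the amount \<open>x\<close> she receives, and a
  seller of \<open>M\<^sub>b - M\<^sub>a\<close> values her leftover at \<open>\<rho>\<^sup>b\<^sub>j > \<rho>\<^sup>a\<^sub>j\<close>, so the welfare of \<open>w\<close> is at most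
  the sum of the welfares of the two pieces. The case of \<open>\<rho>\<^sup>b\<close> is symmetric.\<close>

definition restrict_sellers :: "nat set \<Rightarrow> (nat \<times> nat \<Rightarrow> real) \<Rightarrow> nat \<times> nat \<Rightarrow> real" where
  "restrict_sellers R w e = (if snd e \<in> R then w e else 0)"

lemma sum_restrict_sellers_at_seller:
  "sum (restrict_sellers R w) (edges_at_seller E j)
     = (if j \<in> R then sum w (edges_at_seller E j) else 0)"
  by (auto simp: restrict_sellers_def edges_at_seller_def intro!: sum.cong sum.neutral)

lemma sum_restrict_sellers_sub_edges:
  assumes "finite X" "R \<subseteq> S"
  shows "sum (restrict_sellers R w) (X \<inter> sub_edges E S) = sum w (X \<inter> sub_edges E R)"
proof -
  have "sum (restrict_sellers R w) (X \<inter> sub_edges E S) = sum w {e \<in> X \<inter> sub_edges E S. snd e \<in> R}"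
    unfolding restrict_sellers_def using assms(1) by (intro sum.inter_filter[symmetric]) simp
  also have "{e \<in> X \<inter> sub_edges E S. snd e \<in> R} = X \<inter> sub_edges E R"
    using assms(2) by (auto simp: sub_edges_def)
  finally show ?thesis .
qed

lemma in_P_zero:
  assumes "\<forall>j\<in>M. mono_submod_on (edges_at_seller E j) (f j)"
  shows "in_P E f M (\<lambda>_. 0)"
  using assms unfolding in_P_def mono_submod_on_def by auto

lemma in_P_restrict_sellers:
  assumes f_ok: "\<forall>j\<in>M. mono_submod_on (edges_at_seller E j) (f j)"
    and w: "in_P E f M w" and "S \<subseteq> M"
  shows "in_P E f S (restrict_sellers R w)"
  unfolding in_P_def
proof (intro conjI ballI allI impI)
  fix e assume "e \<in> sub_edges E S"
  then show "0 \<le> restrict_sellers R w e"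
    using w \<open>S \<subseteq> M\<close> by (cases e) (auto simp: in_P_def sub_edges_def restrict_sellers_def)
next
  fix j F assume j: "j \<in> S" and F: "F \<subseteq> edges_at_seller E j"
  then have "sum (restrict_sellers R w) F = (if j \<in> R then sum w F else 0)"
    by (auto simp: restrict_sellers_def edges_at_seller_def intro!: sum.cong sum.neutral)
  then show "sum (restrict_sellers R w) F \<le> f j F"
    using w f_ok j F \<open>S \<subseteq> M\<close> by (auto simp: in_P_def mono_submod_on_def)
qed

lemma liquid_welfare_upper_bound:
  assumes \<sigma>: "\<forall>j\<in>M. \<sigma> j \<ge> 0" and w: "in_P E f M w"
  shows "liquid_welfare N0 E f v B M \<sigma> w
           \<le> (\<Sum>i\<in>N0. B i) + (\<Sum>j\<in>M. \<sigma> j * f j (edges_at_seller E j))"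
proof -
  have "(\<Sum>i\<in>N0. min (v i * sum w (edges_at_buyer E i \<inter> sub_edges E M)) (B i)) \<le> (\<Sum>i\<in>N0. B i)"
    by (rule sum_mono) simp
  moreover have "\<sigma> j * (f j (edges_at_seller E j) - sum w (edges_at_seller E j))
                   \<le> \<sigma> j * f j (edges_at_seller E j)" if j: "j \<in> M" for j
  proof -
    have "sum w (edges_at_seller E j) \<ge> 0"
      using w j by (intro sum_nonneg) (auto simp: in_P_def edges_at_seller_def sub_edges_def)
    then show ?thesis using \<sigma> j by (simp add: mult_left_mono)
  qed
  then have "(\<Sum>j\<in>M. \<sigma> j * (f j (edges_at_seller E j) - sum w (edges_at_seller E j)))
               \<le> (\<Sum>j\<in>M. \<sigma> j * f j (edges_at_seller E j))"
    by (rule sum_mono)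
  ultimately show ?thesis unfolding liquid_welfare_def by linarith
qed

lemma liquid_welfare_le_LW_OPT:
  assumes "\<forall>j\<in>M. \<sigma> j \<ge> 0" and "in_P E f M w"
  shows "liquid_welfare N0 E f v B M \<sigma> w \<le> LW_OPT N0 E f v B M \<sigma>"
  unfolding LW_OPT_def
proof (rule cSUP_upper)
  show "bdd_above (liquid_welfare N0 E f v B M \<sigma> ` {w. in_P E f M w})"
    using liquid_welfare_upper_bound[OF assms(1)] by (intro bdd_aboveI) blast
qed (use assms(2) in simp)

lemma LW_OPT_le:
  assumes "\<forall>j\<in>M. mono_submod_on (edges_at_seller E j) (f j)"
    and "\<And>w. in_P E f M w \<Longrightarrow> liquid_welfare N0 E f v B M \<sigma> w \<le> L"
  shows "LW_OPT N0 E f v B M \<sigma> \<le> L"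
  unfolding LW_OPT_def
proof (rule cSUP_least)
  show "{w. in_P E f M w} \<noteq> {}" using in_P_zero[OF assms(1)] by blast
qed (use assms(2) in auto)

lemma min_add_le_add_min:
  fixes x y b :: "'a :: linordered_ab_group_add"
  assumes "x \<ge> 0" "y \<ge> 0" "b \<ge> 0"
  shows "min (x + y) b \<le> min x b + min y b"
  using assms unfolding min_def
  by (auto intro: add_increasing add_increasing2 add_mono order.trans)

lemma buyer_welfare_split:
  assumes "finite E" and v: "\<forall>i\<in>N0. v i \<ge> 0" and B: "\<forall>i\<in>N0. B i \<ge> 0"
    and w: "\<forall>e\<in>sub_edges E (S \<union> T). 0 \<le> w e"
  shows "(\<Sum>i\<in>N0. min (v i * sum w (edges_at_buyer E i \<inter> sub_edges E (S \<union> T))) (B i))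
     \<le> (\<Sum>i\<in>N0. min (v i * sum (restrict_sellers S w) (edges_at_buyer E i \<inter> sub_edges E S)) (B i))
      + (\<Sum>i\<in>N0. min (v i * sum (restrict_sellers (T - S) w) (edges_at_buyer E i \<inter> sub_edges E T)) (B i))"
  unfolding sum.distrib[symmetric]
proof (rule sum_mono)
  fix i assume i: "i \<in> N0"
  let ?X = "edges_at_buyer E i"
  have X: "finite ?X" using \<open>finite E\<close> by (simp add: edges_at_buyer_def)
  have partition: "?X \<inter> sub_edges E (S \<union> T) = (?X \<inter> sub_edges E S) \<union> (?X \<inter> sub_edges E (T - S))"
    by (auto simp: sub_edges_def)
  have "sum w (?X \<inter> sub_edges E (S \<union> T))
          = sum w (?X \<inter> sub_edges E S) + sum w (?X \<inter> sub_edges E (T - S))"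
    unfolding partition using X by (intro sum.union_disjoint) (auto simp: sub_edges_def)
  moreover have "sum w (?X \<inter> sub_edges E S) \<ge> 0" "sum w (?X \<inter> sub_edges E (T - S)) \<ge> 0"
    using w by (auto simp: sub_edges_def intro!: sum_nonneg)
  ultimately show "min (v i * sum w (?X \<inter> sub_edges E (S \<union> T))) (B i)
      \<le> min (v i * sum (restrict_sellers S w) (?X \<inter> sub_edges E S)) (B i)
       + min (v i * sum (restrict_sellers (T - S) w) (?X \<inter> sub_edges E T)) (B i)"
    using v B i X sum_restrict_sellers_sub_edges[OF X]
    by (simp add: distrib_left min_add_le_add_min)
qed

lemma seller_welfare_split:
  assumes fin: "finite (S \<union> T)"
    and f_ok: "\<forall>j\<in>S \<union> T. mono_submod_on (edges_at_seller E j) (f j)"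
    and w: "in_P E f (S \<union> T) w"
    and \<rho>\<tau>: "\<forall>j\<in>T - S. \<rho> j \<le> \<tau> j" and \<tau>: "\<forall>j\<in>T. \<tau> j \<ge> 0"
  shows "(\<Sum>j\<in>S \<union> T. \<rho> j * (f j (edges_at_seller E j) - sum w (edges_at_seller E j)))
     \<le> (\<Sum>j\<in>S. \<rho> j * (f j (edges_at_seller E j) - sum (restrict_sellers S w) (edges_at_seller E j)))
      + (\<Sum>j\<in>T. \<tau> j * (f j (edges_at_seller E j) - sum (restrict_sellers (T - S) w) (edges_at_seller E j)))"
proof -
  define surplus where "surplus \<sigma> u j = \<sigma> j * (f j (edges_at_seller E j) - sum u (edges_at_seller E j))"
    for \<sigma> u j
  have "(\<Sum>j\<in>S \<union> T. surplus \<rho> w j) = (\<Sum>j\<in>S \<union> (T - S). surplus \<rho> w j)"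
    by (simp add: Un_Diff_cancel)
  also have "\<dots> = (\<Sum>j\<in>S. surplus \<rho> w j) + (\<Sum>j\<in>T - S. surplus \<rho> w j)"
    using fin by (intro sum.union_disjoint) auto
  also have "(\<Sum>j\<in>S. surplus \<rho> w j) = (\<Sum>j\<in>S. surplus \<rho> (restrict_sellers S w) j)"
    by (simp add: surplus_def sum_restrict_sellers_at_seller)
  also have "(\<Sum>j\<in>T - S. surplus \<rho> w j) \<le> (\<Sum>j\<in>T - S. surplus \<tau> (restrict_sellers (T - S) w) j)"
  proof (rule sum_mono)
    fix j assume j: "j \<in> T - S"
    then have "sum w (edges_at_seller E j) \<le> f j (edges_at_seller E j)"
      using w by (auto simp: in_P_def)
    then show "surplus \<rho> w j \<le> surplus \<tau> (restrict_sellers (T - S) w) j"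
      using \<rho>\<tau> j by (simp add: surplus_def sum_restrict_sellers_at_seller mult_right_mono)
  qed
  also have "\<dots> \<le> (\<Sum>j\<in>T. surplus \<tau> (restrict_sellers (T - S) w) j)"
  proof (rule sum_mono2)
    fix j assume j: "j \<in> T - (T - S)"
    then have "f j (edges_at_seller E j) \<ge> 0"
      using f_ok by (auto simp: mono_submod_on_def)
    then show "0 \<le> surplus \<tau> (restrict_sellers (T - S) w) j"
      using \<tau> j by (simp add: surplus_def sum_restrict_sellers_at_seller)
  qed (use fin in auto)
  finally show ?thesis by (simp add: surplus_def)
qed

lemma liquid_welfare_split:
  assumes "finite E" "finite (S \<union> T)"
    and "\<forall>j\<in>S \<union> T. mono_submod_on (edges_at_seller E j) (f j)"
    and "\<forall>i\<in>N0. v i \<ge> 0" "\<forall>i\<in>N0. B i \<ge> 0"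
    and "\<forall>j\<in>T - S. \<rho> j \<le> \<tau> j" "\<forall>j\<in>T. \<tau> j \<ge> 0"
    and w: "in_P E f (S \<union> T) w"
  shows "liquid_welfare N0 E f v B (S \<union> T) \<rho> w
     \<le> liquid_welfare N0 E f v B S \<rho> (restrict_sellers S w)
      + liquid_welfare N0 E f v B T \<tau> (restrict_sellers (T - S) w)"
  using buyer_welfare_split[OF assms(1,4,5), of S T w] seller_welfare_split[OF assms(2,3) w assms(6,7)]
    w unfolding liquid_welfare_def in_P_def by linarith

lemma LW_OPT_le_add:
  assumes "finite E" "finite (S \<union> T)"
    and f_ok: "\<forall>j\<in>S \<union> T. mono_submod_on (edges_at_seller E j) (f j)"
    and "\<forall>i\<in>N0. v i \<ge> 0" "\<forall>i\<in>N0. B i \<ge> 0"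
    and \<rho>: "\<forall>j\<in>S. \<rho> j \<ge> 0" and "\<forall>j\<in>T - S. \<rho> j \<le> \<tau> j" and \<tau>: "\<forall>j\<in>T. \<tau> j \<ge> 0"
  shows "LW_OPT N0 E f v B (S \<union> T) \<rho> \<le> LW_OPT N0 E f v B S \<rho> + LW_OPT N0 E f v B T \<tau>"
proof (rule LW_OPT_le[OF f_ok])
  fix w assume w: "in_P E f (S \<union> T) w"
  have "liquid_welfare N0 E f v B (S \<union> T) \<rho> w
     \<le> liquid_welfare N0 E f v B S \<rho> (restrict_sellers S w)
      + liquid_welfare N0 E f v B T \<tau> (restrict_sellers (T - S) w)"
    by (rule liquid_welfare_split[OF assms(1-5,7,8) w])
  also have "\<dots> \<le> LW_OPT N0 E f v B S \<rho> + LW_OPT N0 E f v B T \<tau>"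
    using \<rho> \<tau> in_P_restrict_sellers[OF f_ok w]
    by (intro add_mono liquid_welfare_le_LW_OPT) auto
  finally show "liquid_welfare N0 E f v B (S \<union> T) \<rho> w
      \<le> LW_OPT N0 E f v B S \<rho> + LW_OPT N0 E f v B T \<tau>" .
qed

theorem lemma4p7:
  fixes n m :: nat
    and E :: "(nat \<times> nat) set"
    and f :: "nat \<Rightarrow> (nat \<times> nat) set \<Rightarrow> real"
    and v B :: "nat \<Rightarrow> real"
    and \<rho>a \<rho>b :: "nat \<Rightarrow> real"
  assumes E_sub: "E \<subseteq> {1..n} \<times> {1..m}"
    and f_ok: "\<forall>j \<in> {1..m}. mono_submod_on (edges_at_seller E j) (f j)"
    and v_pos: "\<forall>i \<in> {1..n}. v i > 0"
    and B_nonneg: "\<forall>i \<in> {1..n}. B i \<ge> 0"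
    and \<rho>a_pos: "\<forall>j \<in> {1..m}. \<rho>a j > 0"
    and \<rho>b_pos: "\<forall>j \<in> {1..m}. \<rho>b j > 0"
  shows "LW_OPT {1..n} E f v B {j \<in> {1..m}. \<rho>a j \<ge> \<rho>b j} \<rho>a
         + LW_OPT {1..n} E f v B {j \<in> {1..m}. \<rho>a j \<le> \<rho>b j} \<rho>b
         \<ge> (LW_OPT {1..n} E f v B {1..m} \<rho>a + LW_OPT {1..n} E f v B {1..m} \<rho>b) / 2"
proof -
  define Ma where "Ma = {j \<in> {1..m}. \<rho>a j \<ge> \<rho>b j}"
  define Mb where "Mb = {j \<in> {1..m}. \<rho>a j \<le> \<rho>b j}"
  have M: "{1..m} = Ma \<union> Mb" by (auto simp: Ma_def Mb_def)
  have "finite E" using E_sub finite_subset by blast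
  note hyps = \<open>finite E\<close> f_ok v_pos B_nonneg \<rho>a_pos \<rho>b_pos
  have "LW_OPT {1..n} E f v B {1..m} \<rho>a \<le> LW_OPT {1..n} E f v B Ma \<rho>a + LW_OPT {1..n} E f v B Mb \<rho>b"
    unfolding M by (rule LW_OPT_le_add) (use hyps M in \<open>auto simp: Ma_def Mb_def less_imp_le\<close>)
  moreover have "LW_OPT {1..n} E f v B {1..m} \<rho>b \<le> LW_OPT {1..n} E f v B Mb \<rho>b + LW_OPT {1..n} E f v B Ma \<rho>a"
    unfolding M Un_commute[of Ma]
    by (rule LW_OPT_le_add) (use hyps M in \<open>auto simp: Ma_def Mb_def less_imp_le\<close>)
  ultimately show ?thesis unfolding Ma_def Mb_def by (simp add: field_simps)
qed

end
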